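(* Let $f:\mathbb{R}^{n+1}\to\mathbb{R}_n$ be an entire slice monogenic function. Then the series $$\sum_{k\ge 0}\frac{1}{k!}(f(x))^{*k}$$ converges uniformly on compact subsets of $\mathbb{R}^{n+1}$ and defines a slice monogenic function on $\mathbb{R}^{n+1}$.
   Context: $\mathbb{R}_n$ is the real Clifford algebra generated by $e_1,\dots,e_n$ with $e_ie_j+e_je_i=-2\delta_{ij}$; paravectors $x=x_0+x_1e_1+\dots+x_ne_n$ are identified with $\mathbb{R}^{n+1}$. $\mathbb{S}^{n-1}=\{\omega=a_1e_1+\dots+a_ne_n: \sum a_i^2=1\}$ (so $\omega^2=-1$), and $\mathbb{C}_\omega=\{u+\omega v: u,v\in\mathbb{R}\}$. A function $f$ on an axially symmetric open set $U$ is slice monogenic if $f(u+\omega v)=\alpha(u,v)+\omega\beta(u,v)$ for all $\omega\in\mathbb{S}^{n-1}$, with $\mathbb{R}_n$-valued differentiable $\alpha,\beta$ satisfying $\alpha(u,-v)=\alpha(u,v)$, $\beta(u,-v)=-\beta(u,v)$ and $\partial_u\alpha-\partial_v\beta=0$, $\partial_u\beta+\partial_v\alpha=0$. For slice monogenic $f=\alpha+\omega\beta$, $g=\gamma+\omega\delta$, the $*$-product is $(f*g)(u+\omega v)=(\alpha\gamma-\beta\delta)+\omega(\beta\gamma+\alpha\delta)$, and $f^{*k}$ is the $k$-fold $*$-product ($f^{*0}=1$). *)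

theory Defs
  imports "HOL-Analysis.Analysis"
begin

text \<open>The generators e_1,...,e_n are indexed by a
finite linearly ordered type 'n (so n = CARD('n) >= 1).  An element of R_n is a real
vector indexed by subsets A of the generators (coefficient of the blade e_A, where
e_A is the ordered product of the e_i, i in A, in increasing order).  The norm is the
Euclidean norm of the coefficient vector.\<close>

type_synonym 'n clif = "real ^ ('n set)"

text \<open>Sign in e_A e_B = bsign A B e_(A symdiff B), using e_i e_j = - e_j e_i (i ~= j)
and e_i e_i = -1.\<close>
definition bsign :: "'n::{finite,linorder} set \<Rightarrow> 'n::{finite,linorder} set \<Rightarrow> real" where
  "bsign A B = (-1) ^ (card {(a, b). a \<in> A \<and> b \<in> B \<and> b < a} + card (A \<inter> B))"

definition cmul :: "'n::{finite,linorder} clif \<Rightarrow> 'n::{finite,linorder} clif \<Rightarrow> 'n::{finite,linorder} clif" where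
  "cmul x y = (\<chi> C. \<Sum>A\<in>UNIV. \<Sum>B\<in>UNIV.
      if (A - B) \<union> (B - A) = C then bsign A B * (x $ A) * (y $ B) else 0)"

definition cone :: "'n::{finite,linorder} clif" where
  "cone = (\<chi> A. if A = {} then 1 else 0)"

definition gen :: "'n::{finite,linorder} \<Rightarrow> 'n::{finite,linorder} clif" where
  "gen i = (\<chi> A. if A = {i} then 1 else 0)"

text \<open>Paravectors: R^(n+1) is represented as real \<times> real^'n::{finite,linorder}, the point (x0, x)
corresponding to x0 + sum_i x_i e_i.  The unit sphere S^(n-1) consists of the
elements omega a = sum_i a_i e_i with a in real^'n::{finite,linorder}, norm a = 1.\<close>

definition omega :: "real ^ ('n::{finite,linorder}) \<Rightarrow> 'n::{finite,linorder} clif" where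
  "omega a = (\<Sum>i\<in>UNIV. (a $ i) *\<^sub>R gen i)"

definition slice_rep ::
  "(real \<times> (real ^ ('n::{finite,linorder})) \<Rightarrow> 'n::{finite,linorder} clif) \<Rightarrow>
   (real \<times> real \<Rightarrow> 'n::{finite,linorder} clif) \<Rightarrow> (real \<times> real \<Rightarrow> 'n::{finite,linorder} clif) \<Rightarrow> bool" where
  "slice_rep f \<alpha> \<beta> \<longleftrightarrow>
     (\<forall>u v a. norm a = 1 \<longrightarrow> f (u, v *\<^sub>R a) = \<alpha> (u, v) + cmul (omega a) (\<beta> (u, v))) \<and>
     (\<forall>u v. \<alpha> (u, -v) = \<alpha> (u, v)) \<and>
     (\<forall>u v. \<beta> (u, -v) = - \<beta> (u, v)) \<and>
     (\<exists>D\<alpha> D\<beta>. \<forall>p. (\<alpha> has_derivative D\<alpha> p) (at p) \<and> (\<beta> has_derivative D\<beta> p) (at p) \<and>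
        D\<alpha> p (1, 0) - D\<beta> p (0, 1) = 0 \<and> D\<beta> p (1, 0) + D\<alpha> p (0, 1) = 0)"

definition slice_monogenic :: "(real \<times> (real ^ ('n::{finite,linorder})) \<Rightarrow> 'n::{finite,linorder} clif) \<Rightarrow> bool" where
  "slice_monogenic f \<longleftrightarrow> (\<exists>\<alpha> \<beta>. slice_rep f \<alpha> \<beta>)"

text \<open>The (unique) components of a slice monogenic function.\<close>
definition slice_comps ::
  "(real \<times> (real ^ ('n::{finite,linorder})) \<Rightarrow> 'n::{finite,linorder} clif) \<Rightarrow>
   (real \<times> real \<Rightarrow> 'n::{finite,linorder} clif) \<times> (real \<times> real \<Rightarrow> 'n::{finite,linorder} clif)" where
  "slice_comps f = (SOME (\<alpha>, \<beta>). slice_rep f \<alpha> \<beta>)"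

text \<open>The function x = u + omega v |-> alpha(u,v) + omega beta(u,v), using the
decomposition u = x0, v = |x|, omega = x/|x| (for x = 0 the omega-term is 0,
consistent with beta(u,0) = 0).\<close>
definition slice_fun ::
  "(real \<times> real \<Rightarrow> (real ^ ('n::{finite,linorder} set))) \<Rightarrow> (real \<times> real \<Rightarrow> 'n::{finite,linorder} clif) \<Rightarrow>
   real \<times> (real ^ ('n::{finite,linorder})) \<Rightarrow> 'n::{finite,linorder} clif" where
  "slice_fun \<alpha> \<beta> x = \<alpha> (fst x, norm (snd x)) + cmul (omega (sgn (snd x))) (\<beta> (fst x, norm (snd x)))"

definition star ::
  "(real \<times> (real ^ ('n::{finite,linorder})) \<Rightarrow> 'n::{finite,linorder} clif) \<Rightarrow>
   (real \<times> (real ^ 'n::{finite,linorder}) \<Rightarrow> 'n::{finite,linorder} clif) \<Rightarrow> real \<times> (real ^ 'n::{finite,linorder}) \<Rightarrow> 'n::{finite,linorder} clif" where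
  "star f g =
     (let (\<alpha>, \<beta>) = slice_comps f; (\<gamma>, \<delta>) = slice_comps g in
      slice_fun (\<lambda>p. cmul (\<alpha> p) (\<gamma> p) - cmul (\<beta> p) (\<delta> p))
                (\<lambda>p. cmul (\<beta> p) (\<gamma> p) + cmul (\<alpha> p) (\<delta> p)))"

fun star_pow ::
  "(real \<times> (real ^ ('n::{finite,linorder})) \<Rightarrow> 'n::{finite,linorder} clif) \<Rightarrow> nat \<Rightarrow> real \<times> (real ^ 'n::{finite,linorder}) \<Rightarrow> 'n::{finite,linorder} clif" where
  "star_pow f 0 = (\<lambda>x. cone)"
| "star_pow f (Suc k) = star f (star_pow f k)"

end

theory Submission
  imports Defs "HOL-Complex_Analysis.Complex_Analysis"
begin

text \<open>
  On every slice the \<open>*\<close>-powers of \<open>f = \<alpha> + \<omega>\<beta>\<close> have components \<open>(P\<^sub>k, Q\<^sub>k)\<close> obeying the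
  recursion of the complex powers \<open>(\<alpha> + i\<beta>)\<^sup>k\<close>, with the Clifford product as multiplication.
  On a compact set they grow at most like \<open>c\<^sup>k\<close>, so the exponential series of the components
  converges locally uniformly. Every blade coordinate of \<open>P\<^sub>k + iQ\<^sub>k\<close> is an entire function of
  \<open>u + iv\<close>, hence by Weierstrass' theorem so is that of the limit: the limit components still satisfy
  the Cauchy-Riemann equations, and they inherit evenness and oddness in \<open>v\<close>.
\<close>

section \<open>Clifford multiplication\<close>

lemma bounded_bilinear_cmul: "bounded_bilinear cmul"
proof -
  have "bilinear cmul"
    unfolding bilinear_def linear_iff cmul_def
    by (simp add: vec_eq_iff sum.distrib[symmetric] sum_distrib_left, intro allI conjI sum.cong refl)
      (auto simp: algebra_simps)
  then show ?thesis
    using bilinear_conv_bounded_bilinear by blast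
qed

interpretation cmul: bounded_bilinear cmul
  by (rule bounded_bilinear_cmul)

lemma cmul_gen_nth: "cmul (gen i) y $ C = bsign {i} (sym_diff C {i}) * y $ sym_diff C {i}"
proof -
  have "cmul (gen i) y $ C =
      (\<Sum>A\<in>UNIV. if A = {i} then (\<Sum>B\<in>UNIV. if sym_diff A B = C then bsign A B * y $ B else 0) else 0)"
    unfolding cmul_def gen_def vec_lambda_beta by (intro sum.cong refl) (simp cong: if_cong)
  also have "\<dots> = (\<Sum>B\<in>UNIV. if sym_diff {i} B = C then bsign {i} B * y $ B else 0)"
    by (simp add: sum.delta)
  also have "\<dots> = (\<Sum>B\<in>UNIV. if B = sym_diff C {i} then bsign {i} B * y $ B else 0)"
    by (intro sum.cong refl) auto
  also have "\<dots> = bsign {i} (sym_diff C {i}) * y $ sym_diff C {i}"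
    by (simp add: sum.delta)
  finally show ?thesis .
qed

lemma cmul_gen_eq_0_iff: "cmul (gen i) y = 0 \<longleftrightarrow> y = 0"
proof
  assume y: "cmul (gen i) y = 0"
  have "bsign {i} B * y $ B = 0" for B
  proof -
    have "sym_diff (sym_diff B {i}) {i} = B"
      by auto
    then show ?thesis
      using arg_cong[OF y, of "\<lambda>z. z $ sym_diff B {i}"] by (simp add: cmul_gen_nth)
  qed
  moreover have "bsign {i} B \<noteq> 0" for B
    by (simp add: bsign_def)
  ultimately show "y = 0"
    by (simp add: vec_eq_iff)
qed (simp add: cmul.zero_right)

lemma omega_axis: "omega (axis i 1) = gen i"
proof -
  have "omega (axis i 1) = (\<Sum>j\<in>UNIV. if j = i then gen j else 0)"
    unfolding omega_def axis_def by (intro sum.cong refl) auto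
  then show ?thesis
    by simp
qed

lemma bounded_linear_omega: "bounded_linear omega"
proof -
  have "linear omega"
    unfolding omega_def linear_iff by (simp add: sum.distrib scaleR_add_left scaleR_sum_right)
  then show ?thesis
    using linear_conv_bounded_linear by blast
qed

lemma omega_minus: "omega (- a) = - omega a"
  by (rule linear_neg[OF bounded_linear.linear[OF bounded_linear_omega]])

section \<open>Cauchy-Riemann pairs\<close>

definition cauchy_riemann :: "(real \<times> real \<Rightarrow> 'a::real_normed_vector) \<Rightarrow> (real \<times> real \<Rightarrow> 'a) \<Rightarrow> bool" where
  "cauchy_riemann \<alpha> \<beta> \<longleftrightarrow> (\<exists>D\<alpha> D\<beta>. \<forall>p. (\<alpha> has_derivative D\<alpha> p) (at p) \<and> (\<beta> has_derivative D\<beta> p) (at p) \<and>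
      D\<alpha> p (1, 0) - D\<beta> p (0, 1) = 0 \<and> D\<beta> p (1, 0) + D\<alpha> p (0, 1) = 0)"

lemma cauchy_riemann_continuous:
  assumes "cauchy_riemann \<alpha> \<beta>"
  shows "continuous_on S \<alpha>" "continuous_on S \<beta>"
proof -
  obtain D\<alpha> D\<beta> where "\<And>p. (\<alpha> has_derivative D\<alpha> p) (at p) \<and> (\<beta> has_derivative D\<beta> p) (at p)"
    using assms unfolding cauchy_riemann_def by blast
  then show "continuous_on S \<alpha>" "continuous_on S \<beta>"
    by (meson continuous_at_imp_continuous_on has_derivative_continuous)+
qed

lemma cauchy_riemann_const: "cauchy_riemann (\<lambda>p. c) (\<lambda>p. 0)"
  unfolding cauchy_riemann_def by (auto intro!: exI[of _ "\<lambda>p h. 0"])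

text \<open>The real and imaginary parts of \<open>(\<alpha> + i\<beta>)(\<gamma> + i\<delta>)\<close>, with \<open>prod\<close> in place of the multiplication.\<close>
lemma (in bounded_bilinear) cauchy_riemann_prod:
  assumes "cauchy_riemann \<alpha> \<beta>" "cauchy_riemann \<gamma> \<delta>"
  shows "cauchy_riemann (\<lambda>p. prod (\<alpha> p) (\<gamma> p) - prod (\<beta> p) (\<delta> p)) (\<lambda>p. prod (\<beta> p) (\<gamma> p) + prod (\<alpha> p) (\<delta> p))"
proof -
  obtain D\<alpha> D\<beta> where \<alpha>\<beta>: "\<And>p. (\<alpha> has_derivative D\<alpha> p) (at p) \<and> (\<beta> has_derivative D\<beta> p) (at p) \<and>
      D\<alpha> p (1, 0) - D\<beta> p (0, 1) = 0 \<and> D\<beta> p (1, 0) + D\<alpha> p (0, 1) = 0"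
    using assms(1) unfolding cauchy_riemann_def by blast
  obtain D\<gamma> D\<delta> where \<gamma>\<delta>: "\<And>p. (\<gamma> has_derivative D\<gamma> p) (at p) \<and> (\<delta> has_derivative D\<delta> p) (at p) \<and>
      D\<gamma> p (1, 0) - D\<delta> p (0, 1) = 0 \<and> D\<delta> p (1, 0) + D\<gamma> p (0, 1) = 0"
    using assms(2) unfolding cauchy_riemann_def by blast
  have cr: "D\<beta> p (0, 1) = D\<alpha> p (1, 0)" "D\<alpha> p (0, 1) = - D\<beta> p (1, 0)"
    "D\<delta> p (0, 1) = D\<gamma> p (1, 0)" "D\<gamma> p (0, 1) = - D\<delta> p (1, 0)" for p
    using \<alpha>\<beta>[of p] \<gamma>\<delta>[of p] by (auto simp: eq_neg_iff_add_eq_0 add.commute)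
  show ?thesis
    unfolding cauchy_riemann_def
  proof (intro exI allI conjI)
    fix p
    show "((\<lambda>p. prod (\<alpha> p) (\<gamma> p) - prod (\<beta> p) (\<delta> p)) has_derivative
      (\<lambda>h. (prod (\<alpha> p) (D\<gamma> p h) + prod (D\<alpha> p h) (\<gamma> p)) - (prod (\<beta> p) (D\<delta> p h) + prod (D\<beta> p h) (\<delta> p)))) (at p)"
      by (intro has_derivative_diff FDERIV) (use \<alpha>\<beta> \<gamma>\<delta> in auto)
    show "((\<lambda>p. prod (\<beta> p) (\<gamma> p) + prod (\<alpha> p) (\<delta> p)) has_derivative
      (\<lambda>h. (prod (\<beta> p) (D\<gamma> p h) + prod (D\<beta> p h) (\<gamma> p)) + (prod (\<alpha> p) (D\<delta> p h) + prod (D\<alpha> p h) (\<delta> p)))) (at p)"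
      by (intro has_derivative_add FDERIV) (use \<alpha>\<beta> \<gamma>\<delta> in auto)
  qed (simp_all add: cr minus_left minus_right algebra_simps)
qed

lemma has_derivative_componentwise_vec:
  fixes f :: "'a::real_normed_vector \<Rightarrow> real ^ 'i"
  assumes "\<And>i. ((\<lambda>x. f x $ i) has_derivative (\<lambda>h. f' h $ i)) (at a within S)"
  shows "(f has_derivative f') (at a within S)"
  by (subst has_derivative_componentwise_within)
    (auto simp: Basis_vec_def cart_eq_inner_axis[symmetric] assms)

lemma bounded_linear_Complex: "bounded_linear (\<lambda>p. Complex (fst p) (snd p))"
proof -
  have "linear (\<lambda>p. Complex (fst p) (snd p))"
    unfolding linear_iff by (simp add: complex_eq_iff)
  then show ?thesis
    using linear_conv_bounded_linear by blast
qed

lemma linear_pair_eq: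
  assumes "linear D"
  shows "D (a, b) = a *\<^sub>R D (1, 0) + b *\<^sub>R D (0, 1)"
proof -
  have "(a, b) = a *\<^sub>R (1::real, 0::real) + b *\<^sub>R (0, 1)"
    by simp
  then show ?thesis
    by (simp only: linear_add[OF assms] linear_scale[OF assms])
qed

definition complexify :: "(real \<times> real \<Rightarrow> real ^ 'i) \<Rightarrow> (real \<times> real \<Rightarrow> real ^ 'i) \<Rightarrow> 'i \<Rightarrow> complex \<Rightarrow> complex" where
  "complexify \<alpha> \<beta> i z = Complex (\<alpha> (Re z, Im z) $ i) (\<beta> (Re z, Im z) $ i)"

lemma cauchy_riemann_imp_holomorphic:
  assumes "cauchy_riemann \<alpha> \<beta>"
  shows "complexify \<alpha> \<beta> i holomorphic_on UNIV"
proof -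
  obtain D\<alpha> D\<beta> where D: "\<And>p. (\<alpha> has_derivative D\<alpha> p) (at p) \<and> (\<beta> has_derivative D\<beta> p) (at p) \<and>
      D\<alpha> p (1, 0) - D\<beta> p (0, 1) = 0 \<and> D\<beta> p (1, 0) + D\<alpha> p (0, 1) = 0"
    using assms unfolding cauchy_riemann_def by blast
  have "(complexify \<alpha> \<beta> i has_field_derivative Complex (D\<alpha> (Re z, Im z) (1, 0) $ i) (D\<beta> (Re z, Im z) (1, 0) $ i)) (at z)"
    for z
  proof -
    define p where "p = (Re z, Im z)"
    have ReIm: "((\<lambda>z. (Re z, Im z)) has_derivative (\<lambda>h. (Re h, Im h))) (at z)"
      by (intro bounded_linear_imp_has_derivative bounded_linear_Pair bounded_linear_Re bounded_linear_Im)
    have "((\<lambda>z. \<alpha> (Re z, Im z) $ i) has_derivative (\<lambda>h. D\<alpha> p (Re h, Im h) $ i)) (at z)"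
      "((\<lambda>z. \<beta> (Re z, Im z) $ i) has_derivative (\<lambda>h. D\<beta> p (Re h, Im h) $ i)) (at z)"
      using diff_chain_at[OF ReIm, of \<alpha> "D\<alpha> p"] diff_chain_at[OF ReIm, of \<beta> "D\<beta> p"] D
      by (auto simp: p_def o_def intro!: bounded_linear.has_derivative[OF bounded_linear_vec_nth])
    then have deriv: "(complexify \<alpha> \<beta> i has_derivative
        (\<lambda>h. Complex (D\<alpha> p (Re h, Im h) $ i) (D\<beta> p (Re h, Im h) $ i))) (at z)"
      unfolding complexify_def
      using bounded_linear.has_derivative[OF bounded_linear_Complex has_derivative_Pair] by simp
    have lin: "linear (D\<alpha> p)" "linear (D\<beta> p)"
      using D[of p] has_derivative_linear by blast+
    have cr: "D\<beta> p (0, 1) = D\<alpha> p (1, 0)" "D\<alpha> p (0, 1) = - D\<beta> p (1, 0)"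
      using D[of p] by (auto simp: eq_neg_iff_add_eq_0 add.commute)
    \<comment> \<open>The Cauchy-Riemann equations make the real derivative complex linear.\<close>
    have "Complex (D\<alpha> p (Re h, Im h) $ i) (D\<beta> p (Re h, Im h) $ i) =
        Complex (D\<alpha> p (1, 0) $ i) (D\<beta> p (1, 0) $ i) * h" for h
      unfolding linear_pair_eq[OF lin(1), of "Re h" "Im h"] linear_pair_eq[OF lin(2), of "Re h" "Im h"]
      by (simp add: cr complex_eq_iff algebra_simps)
    then show ?thesis
      using deriv by (simp add: has_field_derivative_def p_def)
  qed
  then show ?thesis
    by (auto simp: holomorphic_on_def field_differentiable_def field_differentiable_at_within)
qed

lemma holomorphic_imp_cauchy_riemann:
  assumes hol: "\<And>i. complexify \<alpha> \<beta> i holomorphic_on UNIV"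
  shows "cauchy_riemann \<alpha> \<beta>"
proof -
  let ?E = "\<lambda>i p. complexify \<alpha> \<beta> i (Complex (fst p) (snd p))"
  let ?E' = "\<lambda>i p h. deriv (complexify \<alpha> \<beta> i) (Complex (fst p) (snd p)) * Complex (fst h) (snd h)"
  have E: "(?E i has_derivative ?E' i p) (at p)" for i p
  proof -
    have "(complexify \<alpha> \<beta> i has_field_derivative deriv (complexify \<alpha> \<beta> i) z) (at z)" for z
      using hol[of i] by (simp add: DERIV_deriv_iff_field_differentiable holomorphic_on_def field_differentiable_at_within)
    from this[of "Complex (fst p) (snd p)", unfolded has_field_derivative_def] show ?thesis
      using diff_chain_at[OF bounded_linear_imp_has_derivative[OF bounded_linear_Complex]]
      by (simp add: o_def)
  qed
  have \<alpha>: "\<alpha> = (\<lambda>p. \<chi> i. Re (?E i p))" and \<beta>: "\<beta> = (\<lambda>p. \<chi> i. Im (?E i p))"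
    by (simp_all add: complexify_def vec_eq_iff)
  show ?thesis
    unfolding cauchy_riemann_def
  proof (intro exI allI conjI)
    fix p :: "real \<times> real"
    have "((\<lambda>p. \<chi> i. Re (?E i p)) has_derivative (\<lambda>h. \<chi> i. Re (?E' i p h))) (at p)"
      by (rule has_derivative_componentwise_vec, unfold vec_lambda_beta)
        (rule bounded_linear.has_derivative[OF bounded_linear_Re E])
    then show "(\<alpha> has_derivative (\<lambda>h. \<chi> i. Re (?E' i p h))) (at p)"
      by (simp only: \<alpha>[symmetric])
    have "((\<lambda>p. \<chi> i. Im (?E i p)) has_derivative (\<lambda>h. \<chi> i. Im (?E' i p h))) (at p)"
      by (rule has_derivative_componentwise_vec, unfold vec_lambda_beta)
        (rule bounded_linear.has_derivative[OF bounded_linear_Im E])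
    then show "(\<beta> has_derivative (\<lambda>h. \<chi> i. Im (?E' i p h))) (at p)"
      by (simp only: \<beta>[symmetric])
  qed (simp_all add: vec_eq_iff)
qed

lemma cauchy_riemann_iff_holomorphic:
  "cauchy_riemann \<alpha> \<beta> \<longleftrightarrow> (\<forall>i. complexify \<alpha> \<beta> i holomorphic_on UNIV)"
  using cauchy_riemann_imp_holomorphic holomorphic_imp_cauchy_riemann by blast

lemma cauchy_riemann_sum:
  fixes \<alpha> \<beta> :: "'k \<Rightarrow> real \<times> real \<Rightarrow> real ^ 'i"
  assumes "\<And>k. k \<in> I \<Longrightarrow> cauchy_riemann (\<alpha> k) (\<beta> k)"
  shows "cauchy_riemann (\<lambda>p. \<Sum>k\<in>I. c k *\<^sub>R \<alpha> k p) (\<lambda>p. \<Sum>k\<in>I. c k *\<^sub>R \<beta> k p)"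
proof -
  have "complexify (\<lambda>p. \<Sum>k\<in>I. c k *\<^sub>R \<alpha> k p) (\<lambda>p. \<Sum>k\<in>I. c k *\<^sub>R \<beta> k p) i =
      (\<lambda>z. \<Sum>k\<in>I. of_real (c k) * complexify (\<alpha> k) (\<beta> k) i z)" for i
    by (auto simp: complexify_def complex_eq_iff sum_component Re_sum Im_sum)
  then show ?thesis
    using assms by (simp add: cauchy_riemann_iff_holomorphic holomorphic_intros)
qed

lemma cauchy_riemann_uniform_limit:
  fixes \<alpha> \<beta> :: "nat \<Rightarrow> real \<times> real \<Rightarrow> real ^ 'i"
  assumes cr: "\<And>m. cauchy_riemann (\<alpha> m) (\<beta> m)"
    and \<alpha>: "\<And>K. compact K \<Longrightarrow> uniform_limit K \<alpha> \<alpha>' sequentially"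
    and \<beta>: "\<And>K. compact K \<Longrightarrow> uniform_limit K \<beta> \<beta>' sequentially"
  shows "cauchy_riemann \<alpha>' \<beta>'"
  unfolding cauchy_riemann_iff_holomorphic
proof
  fix i
  show "complexify \<alpha>' \<beta>' i holomorphic_on UNIV"
  proof (rule holomorphic_uniform_sequence[where f = "\<lambda>m. complexify (\<alpha> m) (\<beta> m) i"])
    show "complexify (\<alpha> m) (\<beta> m) i holomorphic_on UNIV" for m
      using cr cauchy_riemann_imp_holomorphic by blast
  next
    fix z :: complex
    let ?h = "\<lambda>z::complex. (Re z, Im z)"
    have "compact (?h ` cball z 1)"
      by (intro compact_continuous_image compact_cball continuous_intros)
    moreover have "?h \<in> cball z 1 \<rightarrow> ?h ` cball z 1"
      by blast
    ultimately have "uniform_limit (cball z 1) (\<lambda>m z. \<alpha> m (?h z)) (\<lambda>z. \<alpha>' (?h z)) sequentially"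
      "uniform_limit (cball z 1) (\<lambda>m z. \<beta> m (?h z)) (\<lambda>z. \<beta>' (?h z)) sequentially"
      using uniform_limit_compose' \<alpha> \<beta> by blast+
    then have "uniform_limit (cball z 1) (\<lambda>m. complexify (\<alpha> m) (\<beta> m) i) (complexify \<alpha>' \<beta>' i) sequentially"
      unfolding complexify_def Complex_eq by (intro uniform_limit_intros)
    then show "\<exists>d>0. cball z d \<subseteq> UNIV \<and>
        uniform_limit (cball z d) (\<lambda>m. complexify (\<alpha> m) (\<beta> m) i) (complexify \<alpha>' \<beta>' i) sequentially"
      by (intro exI[of _ 1]) auto
  qed simp
qed

section \<open>Slice functions\<close>

lemma odd_fun_zero:
  fixes \<beta> :: "real \<times> real \<Rightarrow> 'a::real_vector"
  assumes "\<And>u v. \<beta> (u, -v) = - \<beta> (u, v)"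
  shows "\<beta> (u, 0) = 0"
  using assms[of u 0] by (simp add: eq_neg_iff_add_eq_0 scaleR_2[symmetric])

lemma slice_rep_comps_eq:
  assumes "slice_rep f \<alpha> \<beta>"
  shows "\<alpha> (u, v) = (1/2) *\<^sub>R (f (u, v *\<^sub>R axis i 1) + f (u, (-v) *\<^sub>R axis i 1))"
    and "cmul (gen i) (\<beta> (u, v)) = (1/2) *\<^sub>R (f (u, v *\<^sub>R axis i 1) - f (u, (-v) *\<^sub>R axis i 1))"
proof -
  have rep: "\<And>u v a. norm a = 1 \<Longrightarrow> f (u, v *\<^sub>R a) = \<alpha> (u, v) + cmul (omega a) (\<beta> (u, v))"
    and even: "\<And>u v. \<alpha> (u, -v) = \<alpha> (u, v)" and odd: "\<And>u v. \<beta> (u, -v) = - \<beta> (u, v)"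
    using assms unfolding slice_rep_def by auto
  have pos: "f (u, v *\<^sub>R axis i 1) = \<alpha> (u, v) + cmul (gen i) (\<beta> (u, v))"
    using rep[of "axis i 1" u v] by (simp add: omega_axis)
  have neg: "f (u, (-v) *\<^sub>R axis i 1) = \<alpha> (u, v) - cmul (gen i) (\<beta> (u, v))"
    using rep[of "axis i 1" u "-v"] by (simp add: omega_axis even odd cmul.minus_right)
  show "\<alpha> (u, v) = (1/2) *\<^sub>R (f (u, v *\<^sub>R axis i 1) + f (u, (-v) *\<^sub>R axis i 1))"
    "cmul (gen i) (\<beta> (u, v)) = (1/2) *\<^sub>R (f (u, v *\<^sub>R axis i 1) - f (u, (-v) *\<^sub>R axis i 1))"
    unfolding pos neg by (simp_all add: scaleR_add_right[symmetric])
qed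

lemma slice_rep_unique:
  fixes f :: "real \<times> (real ^ 'n::{finite,linorder}) \<Rightarrow> 'n clif"
  assumes "slice_rep f \<alpha> \<beta>" "slice_rep f \<alpha>' \<beta>'"
  shows "\<alpha> = \<alpha>' \<and> \<beta> = \<beta>'"
proof -
  fix i :: 'n
  have "\<alpha> (u, v) = \<alpha>' (u, v)" for u v
    using slice_rep_comps_eq(1)[OF assms(1), where u=u and v=v and i=i]
      slice_rep_comps_eq(1)[OF assms(2), where u=u and v=v and i=i]
    by simp
  moreover have "\<beta> (u, v) = \<beta>' (u, v)" for u v
  proof -
    have "cmul (gen i) (\<beta> (u, v) - \<beta>' (u, v)) = 0"
      using slice_rep_comps_eq(2)[OF assms(1), where u=u and v=v and i=i]
        slice_rep_comps_eq(2)[OF assms(2), where u=u and v=v and i=i]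
      by (simp add: cmul.diff_right)
    then show ?thesis
      by (simp add: cmul_gen_eq_0_iff)
  qed
  ultimately show ?thesis
    by auto
qed

lemma slice_comps_eq:
  assumes "slice_rep f \<alpha> \<beta>"
  shows "slice_comps f = (\<alpha>, \<beta>)"
  unfolding slice_comps_def
proof (rule some_equality)
  show "case (\<alpha>, \<beta>) of (\<alpha>, \<beta>) \<Rightarrow> slice_rep f \<alpha> \<beta>"
    using assms by simp
next
  fix x
  assume "case x of (\<alpha>, \<beta>) \<Rightarrow> slice_rep f \<alpha> \<beta>"
  then show "x = (\<alpha>, \<beta>)"
    using slice_rep_unique[OF assms] by (cases x) auto
qed

lemma slice_rep_iff:
  "slice_rep f \<alpha> \<beta> \<longleftrightarrow>
     (\<forall>u v a. norm a = 1 \<longrightarrow> f (u, v *\<^sub>R a) = \<alpha> (u, v) + cmul (omega a) (\<beta> (u, v))) \<and>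
     (\<forall>u v. \<alpha> (u, -v) = \<alpha> (u, v)) \<and> (\<forall>u v. \<beta> (u, -v) = - \<beta> (u, v)) \<and> cauchy_riemann \<alpha> \<beta>"
  unfolding slice_rep_def cauchy_riemann_def by simp

lemma slice_rep_slice_fun:
  fixes \<alpha> \<beta> :: "real \<times> real \<Rightarrow> 'n::{finite,linorder} clif"
  assumes even: "\<And>u v. \<alpha> (u, -v) = \<alpha> (u, v)" and odd: "\<And>u v. \<beta> (u, -v) = - \<beta> (u, v)"
    and "cauchy_riemann \<alpha> \<beta>"
  shows "slice_rep (slice_fun \<alpha> \<beta>) \<alpha> \<beta>"
  unfolding slice_rep_iff
proof (intro conjI allI impI)
  fix u v :: real and a :: "real ^ ('n::{finite,linorder})"
  assume a: "norm a = 1"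
  have norm: "norm (v *\<^sub>R a) = \<bar>v\<bar>" and sgn: "sgn (v *\<^sub>R a) = sgn v *\<^sub>R a"
    using a by (simp_all add: sgn_scaleR sgn_div_norm)
  consider "v = 0" | "v > 0" | "v < 0"
    by linarith
  then show "slice_fun \<alpha> \<beta> (u, v *\<^sub>R a) = \<alpha> (u, v) + cmul (omega a) (\<beta> (u, v))"
    by cases (simp_all add: a slice_fun_def norm sgn odd_fun_zero[OF odd] cmul.zero_right
        omega_minus even odd cmul.minus_left cmul.minus_right)
qed (use assms in auto)

lemma slice_rep_eq_slice_fun:
  fixes f :: "real \<times> (real ^ 'n::{finite,linorder}) \<Rightarrow> 'n clif"
  assumes "slice_rep f \<alpha> \<beta>"
  shows "f = slice_fun \<alpha> \<beta>"
proof
  fix x :: "real \<times> (real ^ ('n::{finite,linorder}))"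
  obtain u w where x: "x = (u, w)"
    by (cases x)
  have rep: "\<And>u v a. norm a = 1 \<Longrightarrow> f (u, v *\<^sub>R a) = \<alpha> (u, v) + cmul (omega a) (\<beta> (u, v))"
    and odd: "\<And>u v. \<beta> (u, -v) = - \<beta> (u, v)"
    using assms unfolding slice_rep_def by auto
  show "f x = slice_fun \<alpha> \<beta> x"
  proof (cases "w = 0")
    case True
    fix i :: 'n
    show ?thesis
      using rep[of "axis i 1" u 0] True x by (simp add: slice_fun_def odd_fun_zero[OF odd] cmul.zero_right)
  next
    case False
    then have "w = norm w *\<^sub>R sgn w" and "norm (sgn w) = 1"
      by (simp_all add: sgn_div_norm norm_sgn)
    then show ?thesis
      using rep[of "sgn w" u "norm w"] x by (simp add: slice_fun_def)
  qed
qed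

lemma slice_rep_one: "slice_rep (\<lambda>x. cone) (\<lambda>p. cone) (\<lambda>p. 0)"
  unfolding slice_rep_iff by (simp add: cmul.zero_right cauchy_riemann_const)

lemma slice_rep_star:
  assumes f: "slice_rep f \<alpha> \<beta>" and g: "slice_rep g \<gamma> \<delta>"
  shows "slice_rep (star f g)
    (\<lambda>p. cmul (\<alpha> p) (\<gamma> p) - cmul (\<beta> p) (\<delta> p)) (\<lambda>p. cmul (\<beta> p) (\<gamma> p) + cmul (\<alpha> p) (\<delta> p))"
proof -
  have "star f g = slice_fun
      (\<lambda>p. cmul (\<alpha> p) (\<gamma> p) - cmul (\<beta> p) (\<delta> p)) (\<lambda>p. cmul (\<beta> p) (\<gamma> p) + cmul (\<alpha> p) (\<delta> p))"
    unfolding star_def slice_comps_eq[OF f] slice_comps_eq[OF g] by simp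
  moreover have "slice_rep (slice_fun
      (\<lambda>p. cmul (\<alpha> p) (\<gamma> p) - cmul (\<beta> p) (\<delta> p)) (\<lambda>p. cmul (\<beta> p) (\<gamma> p) + cmul (\<alpha> p) (\<delta> p)))
    (\<lambda>p. cmul (\<alpha> p) (\<gamma> p) - cmul (\<beta> p) (\<delta> p)) (\<lambda>p. cmul (\<beta> p) (\<gamma> p) + cmul (\<alpha> p) (\<delta> p))"
  proof (rule slice_rep_slice_fun)
    show "cauchy_riemann
        (\<lambda>p. cmul (\<alpha> p) (\<gamma> p) - cmul (\<beta> p) (\<delta> p)) (\<lambda>p. cmul (\<beta> p) (\<gamma> p) + cmul (\<alpha> p) (\<delta> p))"
      using f g cmul.cauchy_riemann_prod unfolding slice_rep_iff by blast
  qed (use f g in \<open>auto simp: slice_rep_iff cmul.minus_left cmul.minus_right\<close>)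
  ultimately show ?thesis
    by simp
qed

fun star_pow_comps ::
  "(real \<times> real \<Rightarrow> 'n::{finite,linorder} clif) \<Rightarrow> (real \<times> real \<Rightarrow> 'n clif) \<Rightarrow> nat \<Rightarrow>
   (real \<times> real \<Rightarrow> 'n clif) \<times> (real \<times> real \<Rightarrow> 'n clif)" where
  "star_pow_comps \<alpha> \<beta> 0 = (\<lambda>p. cone, \<lambda>p. 0)"
| "star_pow_comps \<alpha> \<beta> (Suc k) =
    (\<lambda>p. cmul (\<alpha> p) (fst (star_pow_comps \<alpha> \<beta> k) p) - cmul (\<beta> p) (snd (star_pow_comps \<alpha> \<beta> k) p),
     \<lambda>p. cmul (\<beta> p) (fst (star_pow_comps \<alpha> \<beta> k) p) + cmul (\<alpha> p) (snd (star_pow_comps \<alpha> \<beta> k) p))"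

lemma slice_rep_star_pow:
  assumes "slice_rep f \<alpha> \<beta>"
  shows "slice_rep (star_pow f k) (fst (star_pow_comps \<alpha> \<beta> k)) (snd (star_pow_comps \<alpha> \<beta> k))"
proof (induction k)
  case 0
  then show ?case
    using slice_rep_one by simp
next
  case (Suc k)
  then show ?case
    using slice_rep_star[OF assms Suc] by simp
qed

lemma slice_rep_sum:
  fixes F :: "'k \<Rightarrow> real \<times> (real ^ 'n::{finite,linorder}) \<Rightarrow> 'n clif"
  assumes rep: "\<And>k. k \<in> I \<Longrightarrow> slice_rep (F k) (\<alpha> k) (\<beta> k)"
  shows "slice_rep (\<lambda>x. \<Sum>k\<in>I. c k *\<^sub>R F k x) (\<lambda>p. \<Sum>k\<in>I. c k *\<^sub>R \<alpha> k p) (\<lambda>p. \<Sum>k\<in>I. c k *\<^sub>R \<beta> k p)"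
proof -
  have "(\<Sum>k\<in>I. c k *\<^sub>R F k x) = (\<Sum>k\<in>I. c k *\<^sub>R slice_fun (\<alpha> k) (\<beta> k) x)" for x
    by (intro sum.cong refl) (simp add: slice_rep_eq_slice_fun[OF rep])
  then have "(\<lambda>x. \<Sum>k\<in>I. c k *\<^sub>R F k x) = slice_fun (\<lambda>p. \<Sum>k\<in>I. c k *\<^sub>R \<alpha> k p) (\<lambda>p. \<Sum>k\<in>I. c k *\<^sub>R \<beta> k p)"
    by (simp add: fun_eq_iff slice_fun_def sum.distrib scaleR_add_right cmul.sum_right cmul.scaleR_right)
  moreover have "slice_rep (slice_fun (\<lambda>p. \<Sum>k\<in>I. c k *\<^sub>R \<alpha> k p) (\<lambda>p. \<Sum>k\<in>I. c k *\<^sub>R \<beta> k p))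
      (\<lambda>p. \<Sum>k\<in>I. c k *\<^sub>R \<alpha> k p) (\<lambda>p. \<Sum>k\<in>I. c k *\<^sub>R \<beta> k p)"
    using rep by (intro slice_rep_slice_fun cauchy_riemann_sum)
      (auto simp: slice_rep_iff sum_negf[symmetric] intro!: sum.cong)
  ultimately show ?thesis
    by simp
qed

lemma uniform_limit_slice_fun:
  fixes \<alpha> \<beta> :: "nat \<Rightarrow> real \<times> real \<Rightarrow> 'n::{finite,linorder} clif"
  assumes \<alpha>: "\<And>K. compact K \<Longrightarrow> uniform_limit K \<alpha> \<alpha>' sequentially"
    and \<beta>: "\<And>K. compact K \<Longrightarrow> uniform_limit K \<beta> \<beta>' sequentially"
    and "continuous_on UNIV \<beta>'" and "compact K"
  shows "uniform_limit K (\<lambda>m. slice_fun (\<alpha> m) (\<beta> m)) (slice_fun \<alpha>' \<beta>') sequentially"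
proof -
  let ?h = "\<lambda>x :: real \<times> (real ^ ('n::{finite,linorder})). (fst x, norm (snd x))"
  have hK: "compact (?h ` K)"
    by (intro compact_continuous_image continuous_intros assms)
  moreover have "?h \<in> K \<rightarrow> ?h ` K"
    by blast
  ultimately have "uniform_limit K (\<lambda>m x. \<alpha> m (?h x)) (\<lambda>x. \<alpha>' (?h x)) sequentially"
    "uniform_limit K (\<lambda>m x. \<beta> m (?h x)) (\<lambda>x. \<beta>' (?h x)) sequentially"
    using uniform_limit_compose' \<alpha> \<beta> by blast+
  moreover have "bounded ((\<lambda>x. \<beta>' (?h x)) ` K)"
  proof -
    have "compact (\<beta>' ` ?h ` K)"
      using hK continuous_on_subset[OF assms(3)] by (blast intro: compact_continuous_image)
    then show ?thesis
      by (simp add: image_image compact_imp_bounded)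
  qed
  moreover have "bounded ((\<lambda>x. omega (sgn (snd x))) ` K)"
  proof (rule bounded_subset)
    show "bounded (omega ` cball 0 1)"
      by (intro bounded_linear_image bounded_cball bounded_linear_omega)
    show "(\<lambda>x. omega (sgn (snd x))) ` K \<subseteq> omega ` cball 0 1"
      by (auto simp: norm_sgn)
  qed
  ultimately show ?thesis
    unfolding slice_fun_def
    by (intro uniform_limit_intros cmul.bounded_uniform_limit uniform_limit_const)
qed

lemma slice_rep_uniform_limit:
  fixes F :: "nat \<Rightarrow> real \<times> (real ^ 'n::{finite,linorder}) \<Rightarrow> 'n clif"
  assumes rep: "\<And>m. slice_rep (F m) (\<alpha> m) (\<beta> m)"
    and \<alpha>: "\<And>K. compact K \<Longrightarrow> uniform_limit K \<alpha> \<alpha>' sequentially"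
    and \<beta>: "\<And>K. compact K \<Longrightarrow> uniform_limit K \<beta> \<beta>' sequentially"
  shows "slice_rep (slice_fun \<alpha>' \<beta>') \<alpha>' \<beta>'"
    and "compact K \<Longrightarrow> uniform_limit K F (slice_fun \<alpha>' \<beta>') sequentially"
proof -
  have cr: "cauchy_riemann \<alpha>' \<beta>'"
    using rep by (intro cauchy_riemann_uniform_limit[OF _ \<alpha> \<beta>]) (auto simp: slice_rep_iff)
  have \<alpha>_lim: "(\<lambda>m. \<alpha> m p) \<longlonglongrightarrow> \<alpha>' p" and \<beta>_lim: "(\<lambda>m. \<beta> m p) \<longlonglongrightarrow> \<beta>' p" for p
    using \<alpha>[OF compact_sing, of p] \<beta>[OF compact_sing, of p] by simp_all
  show "slice_rep (slice_fun \<alpha>' \<beta>') \<alpha>' \<beta>'"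
  proof (rule slice_rep_slice_fun[OF _ _ cr])
    fix u v
    show "\<alpha>' (u, -v) = \<alpha>' (u, v)"
      using \<alpha>_lim[of "(u, -v)"] \<alpha>_lim[of "(u, v)"] rep by (simp add: slice_rep_iff LIMSEQ_unique)
    show "\<beta>' (u, -v) = - \<beta>' (u, v)"
      using \<beta>_lim[of "(u, -v)"] tendsto_minus[OF \<beta>_lim[of "(u, v)"]] rep
      by (simp add: slice_rep_iff LIMSEQ_unique)
  qed
  have "F = (\<lambda>m. slice_fun (\<alpha> m) (\<beta> m))"
    using rep slice_rep_eq_slice_fun by blast
  then show "uniform_limit K F (slice_fun \<alpha>' \<beta>') sequentially" if "compact K"
    using uniform_limit_slice_fun[OF \<alpha> \<beta> cauchy_riemann_continuous(2)[OF cr] that] by simp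
qed

section \<open>The exponential series\<close>

lemma uniform_limit_exp_series:
  fixes F :: "nat \<Rightarrow> 'a \<Rightarrow> 'b::banach"
  assumes "\<And>k x. x \<in> K \<Longrightarrow> norm (F k x) \<le> B * c ^ k"
  shows "uniform_limit K (\<lambda>m x. \<Sum>k<m. (1 / fact k) *\<^sub>R F k x) (\<lambda>x. \<Sum>k. (1 / fact k) *\<^sub>R F k x) sequentially"
proof (rule Weierstrass_m_test)
  show "summable (\<lambda>k. B * c ^ k / fact k)"
    using summable_mult[OF summable_exp[of c], of B] by (simp add: field_simps)
  show "norm ((1 / fact k) *\<^sub>R F k x) \<le> B * c ^ k / fact k" if "x \<in> K" for k x
    using assms[OF that, of k] by (simp add: divide_right_mono)
qed

lemma star_pow_comps_bound:
  fixes \<alpha> \<beta> :: "real \<times> real \<Rightarrow> 'n::{finite,linorder} clif"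
  assumes "compact S" "continuous_on S \<alpha>" "continuous_on S \<beta>"
  obtains c where
    "\<And>k p. p \<in> S \<Longrightarrow> norm (fst (star_pow_comps \<alpha> \<beta> k) p) \<le> norm (cone :: 'n clif) * c ^ k"
    "\<And>k p. p \<in> S \<Longrightarrow> norm (snd (star_pow_comps \<alpha> \<beta> k) p) \<le> norm (cone :: 'n clif) * c ^ k"
proof -
  have "bounded (\<alpha> ` S \<union> \<beta> ` S)"
    using assms by (simp add: compact_imp_bounded compact_continuous_image)
  then obtain M where M: "\<And>p. p \<in> S \<Longrightarrow> norm (\<alpha> p) \<le> M" "\<And>p. p \<in> S \<Longrightarrow> norm (\<beta> p) \<le> M" "M \<ge> 0"
    unfolding bounded_pos by (auto intro: less_imp_le)
  obtain K where K: "\<And>a b :: 'n clif. norm (cmul a b) \<le> norm a * norm b * K" "K > 0"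
    using cmul.pos_bounded by blast
  have cmul_le: "norm (cmul a b) \<le> M * norm b * K" if "norm a \<le> M" for a b :: "'n clif"
    using K(1)[of a b] mult_right_mono[OF that, of "norm b * K"] K(2) by (simp add: mult.assoc)
  define c where "c = 2 * M * K"
  have sum_le: "norm (fst (star_pow_comps \<alpha> \<beta> k) p) + norm (snd (star_pow_comps \<alpha> \<beta> k) p)
      \<le> norm (cone :: 'n clif) * c ^ k" if p: "p \<in> S" for k p
  proof (induction k)
    case 0
    then show ?case
      by simp
  next
    case (Suc k)
    let ?P = "fst (star_pow_comps \<alpha> \<beta> k) p" and ?Q = "snd (star_pow_comps \<alpha> \<beta> k) p"
    have "norm (fst (star_pow_comps \<alpha> \<beta> (Suc k)) p) + norm (snd (star_pow_comps \<alpha> \<beta> (Suc k)) p)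
        \<le> (norm (cmul (\<alpha> p) ?P) + norm (cmul (\<beta> p) ?Q)) + (norm (cmul (\<beta> p) ?P) + norm (cmul (\<alpha> p) ?Q))"
      by (simp only: star_pow_comps.simps fst_conv snd_conv) (intro add_mono norm_triangle_ineq4 norm_triangle_ineq)
    also have "\<dots> \<le> (M * norm ?P * K + M * norm ?Q * K) + (M * norm ?P * K + M * norm ?Q * K)"
      using cmul_le M p by (intro add_mono) auto
    also have "\<dots> = c * (norm ?P + norm ?Q)"
      by (simp add: c_def algebra_simps)
    also have "\<dots> \<le> c * (norm (cone :: 'n clif) * c ^ k)"
      using Suc M(3) K(2) unfolding c_def by (intro mult_left_mono) auto
    finally show ?case
      by (simp add: algebra_simps)
  qed
  show ?thesis
  proof (rule that)
    show "norm (fst (star_pow_comps \<alpha> \<beta> k) p) \<le> norm (cone :: 'n clif) * c ^ k"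
      "norm (snd (star_pow_comps \<alpha> \<beta> k) p) \<le> norm (cone :: 'n clif) * c ^ k" if "p \<in> S" for k p
      using sum_le[OF that, of k] norm_ge_zero[of "fst (star_pow_comps \<alpha> \<beta> k) p"]
        norm_ge_zero[of "snd (star_pow_comps \<alpha> \<beta> k) p"] by linarith+
  qed
qed

lemma uniform_limit_exp_star_pow_comps:
  fixes \<alpha> \<beta> :: "real \<times> real \<Rightarrow> 'n::{finite,linorder} clif"
  assumes "cauchy_riemann \<alpha> \<beta>" "compact K"
  shows "uniform_limit K (\<lambda>m p. \<Sum>k<m. (1 / fact k) *\<^sub>R fst (star_pow_comps \<alpha> \<beta> k) p)
      (\<lambda>p. \<Sum>k. (1 / fact k) *\<^sub>R fst (star_pow_comps \<alpha> \<beta> k) p) sequentially"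
    and "uniform_limit K (\<lambda>m p. \<Sum>k<m. (1 / fact k) *\<^sub>R snd (star_pow_comps \<alpha> \<beta> k) p)
      (\<lambda>p. \<Sum>k. (1 / fact k) *\<^sub>R snd (star_pow_comps \<alpha> \<beta> k) p) sequentially"
proof -
  obtain c :: real where c:
    "\<And>k p. p \<in> K \<Longrightarrow> norm (fst (star_pow_comps \<alpha> \<beta> k) p) \<le> norm (cone :: 'n clif) * c ^ k"
    "\<And>k p. p \<in> K \<Longrightarrow> norm (snd (star_pow_comps \<alpha> \<beta> k) p) \<le> norm (cone :: 'n clif) * c ^ k"
    using star_pow_comps_bound[OF assms(2) cauchy_riemann_continuous[OF assms(1)]] by blast
  show "uniform_limit K (\<lambda>m p. \<Sum>k<m. (1 / fact k) *\<^sub>R fst (star_pow_comps \<alpha> \<beta> k) p)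
      (\<lambda>p. \<Sum>k. (1 / fact k) *\<^sub>R fst (star_pow_comps \<alpha> \<beta> k) p) sequentially"
    using c(1) by (rule uniform_limit_exp_series)
  show "uniform_limit K (\<lambda>m p. \<Sum>k<m. (1 / fact k) *\<^sub>R snd (star_pow_comps \<alpha> \<beta> k) p)
      (\<lambda>p. \<Sum>k. (1 / fact k) *\<^sub>R snd (star_pow_comps \<alpha> \<beta> k) p) sequentially"
    using c(2) by (rule uniform_limit_exp_series)
qed

theorem mainTheorem1:
  fixes f :: "real \<times> (real ^ ('n::{finite,linorder})) \<Rightarrow> 'n::{finite,linorder} clif"
  assumes "slice_monogenic f"
  shows "\<exists>g. (\<forall>K. compact K \<longrightarrow>
              uniform_limit K (\<lambda>m x. \<Sum>k<m. (1 / fact k) *\<^sub>R star_pow f k x) g sequentially)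
           \<and> slice_monogenic g"
proof -
  obtain \<alpha> \<beta> where rep: "slice_rep f \<alpha> \<beta>"
    using assms unfolding slice_monogenic_def by blast
  define P where "P k = fst (star_pow_comps \<alpha> \<beta> k)" for k
  define Q where "Q k = snd (star_pow_comps \<alpha> \<beta> k)" for k
  have "slice_rep (star_pow f k) (P k) (Q k)" for k
    unfolding P_def Q_def by (rule slice_rep_star_pow[OF rep])
  then have partial_sums: "slice_rep (\<lambda>x. \<Sum>k<m. (1 / fact k) *\<^sub>R star_pow f k x)
      (\<lambda>p. \<Sum>k<m. (1 / fact k) *\<^sub>R P k p) (\<lambda>p. \<Sum>k<m. (1 / fact k) *\<^sub>R Q k p)" for m
    by (rule slice_rep_sum)
  have cr: "cauchy_riemann \<alpha> \<beta>"
    using rep by (simp add: slice_rep_iff)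
  note limits = slice_rep_uniform_limit[OF partial_sums,
      OF uniform_limit_exp_star_pow_comps(1)[OF cr, folded P_def] uniform_limit_exp_star_pow_comps(2)[OF cr, folded Q_def]]
  then show ?thesis
    unfolding slice_monogenic_def by blast
qed

end
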